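(* Let $R$ be a principal ideal domain and $a\in R$ with $Ra\neq 0$. Then the left ideal $Ra$ is extremely prime if and only if $a$ is irreducible and invariant.
   Context: A principal ideal domain (PID) is a (not necessarily commutative) domain in which every left ideal and every right ideal is principal. A left ideal $\mathfrak{p}$ is extremely prime if $\mathfrak{p}\neq R$ and for $a,b\in R$, $ab\in\mathfrak{p}$ implies $a\in\mathfrak{p}$ or $b\in\mathfrak{p}$. A non-unit $a$ is irreducible if $a=bc$ implies $b$ or $c$ is a unit. A nonzero $a$ is invariant if $Ra=aR$. *)

theory Defs
  imports Main
begin

definition left_ideal :: "'a::ring_1 set \<Rightarrow> bool" where
  "left_ideal I \<longleftrightarrow> 0 \<in> I \<and> (\<forall>x\<in>I. \<forall>y\<in>I. x + y \<in> I) \<and> (\<forall>r. \<forall>x\<in>I. r * x \<in> I)"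

definition right_ideal :: "'a::ring_1 set \<Rightarrow> bool" where
  "right_ideal I \<longleftrightarrow> 0 \<in> I \<and> (\<forall>x\<in>I. \<forall>y\<in>I. x + y \<in> I) \<and> (\<forall>r. \<forall>x\<in>I. x * r \<in> I)"

definition lprinc :: "'a::ring_1 \<Rightarrow> 'a set" where
  "lprinc a = {r * a | r. True}"

definition rprinc :: "'a::ring_1 \<Rightarrow> 'a set" where
  "rprinc a = {a * r | r. True}"

text \<open>The ring (type) is a PID: every left ideal and every right ideal is principal
  (the domain property is provided by the type class).\<close>
definition pid_ring :: "'a::ring_1_no_zero_divisors itself \<Rightarrow> bool" where
  "pid_ring _ \<longleftrightarrow>
     (\<forall>I::'a set. left_ideal I \<longrightarrow> (\<exists>a. I = lprinc a)) \<and>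
     (\<forall>I::'a set. right_ideal I \<longrightarrow> (\<exists>a. I = rprinc a))"

definition extremely_prime :: "'a::ring_1 set \<Rightarrow> bool" where
  "extremely_prime P \<longleftrightarrow> P \<noteq> UNIV \<and> (\<forall>a b. a * b \<in> P \<longrightarrow> a \<in> P \<or> b \<in> P)"

definition nc_unit :: "'a::ring_1 \<Rightarrow> bool" where
  "nc_unit a \<longleftrightarrow> (\<exists>b. a * b = 1 \<and> b * a = 1)"

definition nc_irreducible :: "'a::ring_1 \<Rightarrow> bool" where
  "nc_irreducible a \<longleftrightarrow> \<not> nc_unit a \<and> (\<forall>b c. a = b * c \<longrightarrow> nc_unit b \<or> nc_unit c)"

definition invariant :: "'a::ring_1 \<Rightarrow> bool" where
  "invariant a \<longleftrightarrow> a \<noteq> 0 \<and> lprinc a = rprinc a"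

end

theory Submission
  imports Defs
begin

text \<open>If \<open>Ra\<close> is extremely prime, it is also a right ideal: for \<open>r \<notin> Ra\<close>, extreme
  primality allows cancelling \<open>r\<close> on the right, and the chain of left ideals
  \<open>Ra \<subseteq> Ra + Rar \<subseteq> Ra + Rar + Rar\<^sup>2 \<subseteq> \<dots>\<close> stabilises because a PID is left noetherian,
  so \<open>a r\<^sup>N\<^sup>+\<^sup>1\<close> is a left linear combination of \<open>a, a r, \<dots>, a r\<^sup>N\<close> for some \<open>N\<close>; peeling
  off one factor \<open>r\<close> at a time leaves \<open>a r \<in> Ra\<close>. Being two-sided, \<open>Ra\<close> is also a principal
  right ideal \<open>bR\<close>, and writing \<open>b = u a\<close> and cancelling \<open>u\<close> on the left gives \<open>Ra = aR\<close>.
  Conversely, for irreducible \<open>a\<close> the left ideal \<open>Ra\<close> is maximal, so \<open>x \<notin> Ra\<close> gives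
  \<open>1 = \<alpha>a + \<beta>x\<close>, and then \<open>y = \<alpha>ay + \<beta>xy \<in> Ra\<close> whenever \<open>xy \<in> Ra\<close>, because
  \<open>ay \<in> aR = Ra\<close>.\<close>

lemma lprinc_iff: "x \<in> lprinc a \<longleftrightarrow> (\<exists>r. x = r * a)"
  by (auto simp: lprinc_def)

lemma rprinc_iff: "x \<in> rprinc a \<longleftrightarrow> (\<exists>r. x = a * r)"
  by (auto simp: rprinc_def)

lemma self_in_lprinc: "a \<in> lprinc a"
  by (metis lprinc_iff mult_1_left)

lemma self_in_rprinc: "a \<in> rprinc a"
  by (metis rprinc_iff mult_1_right)

lemma left_ideal_lprinc: "left_ideal (lprinc a)"
  unfolding left_ideal_def
proof (intro conjI ballI allI)
  have "0 = 0 * a"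
    by simp
  then show "0 \<in> lprinc a"
    using lprinc_iff by blast
next
  fix x y assume "x \<in> lprinc a" "y \<in> lprinc a"
  then obtain r s where "x = r * a" "y = s * a"
    by (auto simp: lprinc_iff)
  then have "x + y = (r + s) * a"
    by (simp add: distrib_right)
  then show "x + y \<in> lprinc a"
    by (auto simp: lprinc_iff)
next
  fix s x assume "x \<in> lprinc a"
  then obtain r where "x = r * a"
    by (auto simp: lprinc_iff)
  then have "s * x = (s * r) * a"
    by (simp add: mult.assoc)
  then show "s * x \<in> lprinc a"
    by (auto simp: lprinc_iff)
qed

lemma left_ideal_add: "left_ideal I \<Longrightarrow> x \<in> I \<Longrightarrow> y \<in> I \<Longrightarrow> x + y \<in> I"
  by (simp add: left_ideal_def)

lemma left_ideal_mult: "left_ideal I \<Longrightarrow> x \<in> I \<Longrightarrow> r * x \<in> I"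
  by (simp add: left_ideal_def)

lemma lprinc_subset_left_ideal: "left_ideal I \<Longrightarrow> a \<in> I \<Longrightarrow> lprinc a \<subseteq> I"
  by (auto simp: lprinc_iff left_ideal_mult)

lemma mult_eq_1_commute:
  fixes x :: "'a::ring_1_no_zero_divisors"
  assumes "x * y = 1"
  shows "y * x = 1"
proof -
  have "x * (y * x) = x"
    using assms by (simp flip: mult.assoc)
  moreover have "x \<noteq> 0"
    using assms by auto
  ultimately show ?thesis
    by simp
qed

lemma mult_eq_1_imp_nc_unit:
  fixes x :: "'a::ring_1_no_zero_divisors"
  assumes "x * y = 1"
  shows "nc_unit x" and "nc_unit y"
  using assms mult_eq_1_commute[OF assms] by (auto simp: nc_unit_def)

lemma lprinc_eq_UNIV_iff:
  fixes a :: "'a::ring_1_no_zero_divisors"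
  shows "lprinc a = UNIV \<longleftrightarrow> nc_unit a"
proof
  assume "lprinc a = UNIV"
  then obtain t where "1 = t * a"
    using lprinc_iff by blast
  then show "nc_unit a"
    using mult_eq_1_imp_nc_unit(2) by metis
next
  assume "nc_unit a"
  then obtain c where "c * a = 1"
    by (auto simp: nc_unit_def)
  then have "x = (x * c) * a" for x
    by (simp add: mult.assoc)
  then show "lprinc a = UNIV"
    using lprinc_iff by blast
qed

lemma pid_left_ideal_chain_stabilises:
  fixes I :: "nat \<Rightarrow> 'a::ring_1_no_zero_divisors set"
  assumes pid: "pid_ring TYPE('a)" and ideals: "\<And>n. left_ideal (I n)" and "mono I"
  shows "\<exists>N. \<forall>n\<ge>N. I n = I N"
proof -
  have "left_ideal (\<Union>n. I n)"
    unfolding left_ideal_def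
  proof (intro conjI ballI allI)
    show "0 \<in> (\<Union>n. I n)"
      using ideals by (auto simp: left_ideal_def)
  next
    fix x y assume "x \<in> (\<Union>n. I n)" "y \<in> (\<Union>n. I n)"
    then obtain m n where "x \<in> I m" "y \<in> I n"
      by blast
    then have "x \<in> I (max m n)" "y \<in> I (max m n)"
      using \<open>mono I\<close> by (auto dest: monoD[of I m "max m n"] monoD[of I n "max m n"])
    then show "x + y \<in> (\<Union>n. I n)"
      using ideals left_ideal_add by blast
  next
    fix r x assume "x \<in> (\<Union>n. I n)"
    then show "r * x \<in> (\<Union>n. I n)"
      using ideals left_ideal_mult by blast
  qed
  then obtain g where g: "(\<Union>n. I n) = lprinc g"
    using pid by (auto simp: pid_ring_def)
  then obtain N where "g \<in> I N"
    using self_in_lprinc by blast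
  then have "I n \<subseteq> I N" for n
    using g lprinc_subset_left_ideal[OF ideals] by blast
  then have "I n = I N" if "n \<ge> N" for n
    using \<open>mono I\<close> that by (simp add: monoD subset_antisym)
  then show ?thesis
    by blast
qed

lemma nc_irreducible_lprinc_comaximal:
  fixes a :: "'a::ring_1_no_zero_divisors"
  assumes pid: "pid_ring TYPE('a)" and irr: "nc_irreducible a" and x: "x \<notin> lprinc a"
  shows "\<exists>\<alpha> \<beta>. \<alpha> * a + \<beta> * x = 1"
proof -
  define I where "I = {p * a + q * x | p q. True}"
  have "left_ideal I"
    unfolding left_ideal_def I_def
  proof (intro conjI ballI allI)
    have "0 = 0 * a + 0 * x"
      by simp
    then show "0 \<in> {p * a + q * x | p q. True}"
      by blast
  next
    fix u v assume "u \<in> {p * a + q * x | p q. True}" "v \<in> {p * a + q * x | p q. True}"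
    then obtain p1 q1 p2 q2 where "u = p1 * a + q1 * x" "v = p2 * a + q2 * x"
      by blast
    then have "u + v = (p1 + p2) * a + (q1 + q2) * x"
      by (simp add: algebra_simps)
    then show "u + v \<in> {p * a + q * x | p q. True}"
      by blast
  next
    fix r u assume "u \<in> {p * a + q * x | p q. True}"
    then obtain p q where "u = p * a + q * x"
      by blast
    then have "r * u = (r * p) * a + (r * q) * x"
      by (simp add: algebra_simps)
    then show "r * u \<in> {p * a + q * x | p q. True}"
      by blast
  qed
  then obtain d where I_eq: "I = lprinc d"
    using pid by (auto simp: pid_ring_def)
  have "a = 1 * a + 0 * x" "x = 0 * a + 1 * x"
    by simp_all
  then have "a \<in> I" "x \<in> I"
    unfolding I_def by blast+
  then obtain u w where a_eq: "a = u * d" and x_eq: "x = w * d"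
    unfolding I_eq lprinc_iff by blast
  have "\<not> nc_unit u"
  proof
    assume "nc_unit u"
    then obtain v where "v * u = 1"
      by (auto simp: nc_unit_def)
    then have "x = (w * v) * a"
      using a_eq x_eq by (simp add: mult.assoc flip: mult.assoc[of v u])
    then show False
      using x lprinc_iff by blast
  qed
  then have "nc_unit d"
    using irr a_eq by (auto simp: nc_irreducible_def)
  then obtain e where "e * d = 1"
    by (auto simp: nc_unit_def)
  then have "1 \<in> I"
    unfolding I_eq lprinc_iff by metis
  then show ?thesis
    unfolding I_def by auto
qed

definition lspan_pows :: "'a::ring_1 \<Rightarrow> 'a \<Rightarrow> nat \<Rightarrow> 'a set" where
  "lspan_pows a r n = {\<Sum>k\<le>n. q k * a * r ^ k | q. True}"

lemma lspan_pows_iff: "x \<in> lspan_pows a r n \<longleftrightarrow> (\<exists>q. x = (\<Sum>k\<le>n. q k * a * r ^ k))"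
  by (auto simp: lspan_pows_def)

lemma lspan_powsI: "(\<Sum>k\<le>n. q k * a * r ^ k) \<in> lspan_pows a r n"
  by (auto simp: lspan_pows_def)

lemma left_ideal_lspan_pows: "left_ideal (lspan_pows a r n)"
  unfolding left_ideal_def
proof (intro conjI ballI allI)
  show "0 \<in> lspan_pows a r n"
    using lspan_powsI[where q = "\<lambda>_. 0"] by simp
next
  fix x y assume "x \<in> lspan_pows a r n" "y \<in> lspan_pows a r n"
  then obtain q p where "x = (\<Sum>k\<le>n. q k * a * r ^ k)" "y = (\<Sum>k\<le>n. p k * a * r ^ k)"
    by (auto simp: lspan_pows_iff)
  then have "x + y = (\<Sum>k\<le>n. (q k + p k) * a * r ^ k)"
    by (simp add: sum.distrib distrib_right)
  then show "x + y \<in> lspan_pows a r n"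
    by (simp add: lspan_powsI)
next
  fix s x assume "x \<in> lspan_pows a r n"
  then obtain q where "x = (\<Sum>k\<le>n. q k * a * r ^ k)"
    by (auto simp: lspan_pows_iff)
  then have "s * x = (\<Sum>k\<le>n. (s * q k) * a * r ^ k)"
    by (simp add: sum_distrib_left mult.assoc)
  then show "s * x \<in> lspan_pows a r n"
    by (simp add: lspan_powsI)
qed

lemma lspan_pows_0: "lspan_pows a r 0 = lprinc a"
proof (intro set_eqI iffI)
  fix x assume "x \<in> lspan_pows a r 0"
  then show "x \<in> lprinc a"
    by (auto simp: lspan_pows_iff lprinc_iff)
next
  fix x assume "x \<in> lprinc a"
  then obtain c where "x = c * a"
    by (auto simp: lprinc_iff)
  then show "x \<in> lspan_pows a r 0"
    using lspan_powsI[where n = 0 and q = "\<lambda>_. c"] by simp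
qed

lemma mono_lspan_pows: "mono (lspan_pows a r)"
  unfolding mono_iff_le_Suc
proof (intro allI subsetI)
  fix n x assume "x \<in> lspan_pows a r n"
  then obtain q where "x = (\<Sum>k\<le>n. q k * a * r ^ k)"
    by (auto simp: lspan_pows_iff)
  then have "x = (\<Sum>k\<le>Suc n. (if k \<le> n then q k else 0) * a * r ^ k)"
    by simp
  then show "x \<in> lspan_pows a r (Suc n)"
    by (simp only: lspan_powsI)
qed

lemma pow_in_lspan_pows: "a * r ^ n \<in> lspan_pows a r n"
proof -
  have "(\<Sum>k\<le>n. (if k = n then 1 else 0) * a * r ^ k) = (\<Sum>k\<le>n. if k = n then a * r ^ k else 0)"
    by (rule sum.cong) auto
  then show ?thesis
    using lspan_powsI[where n = n and q = "\<lambda>k. if k = n then 1 else 0" and a = a and r = r] by simp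
qed

lemma lspan_pows_descent:
  assumes cancel: "\<And>x. x * r \<in> lprinc a \<Longrightarrow> x \<in> lprinc a"
  shows "a * r ^ Suc n \<in> lspan_pows a r n \<Longrightarrow> a * r \<in> lprinc a"
proof (induction n)
  case 0
  then show ?case
    by (simp add: lspan_pows_0)
next
  case (Suc n)
  then obtain q where q: "a * r ^ Suc (Suc n) = (\<Sum>k\<le>Suc n. q k * a * r ^ k)"
    by (auto simp: lspan_pows_iff)
  define s where "s = (\<Sum>k\<le>n. q (Suc k) * a * r ^ k)"
  have "s \<in> lspan_pows a r n"
    unfolding s_def by (rule lspan_powsI)
  have "a * r ^ Suc (Suc n) = q 0 * a + s * r"
    unfolding q s_def sum.atMost_Suc_shift
    by (simp add: sum_distrib_right mult.assoc power_Suc2 del: power_Suc)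
  then have "(a * r ^ Suc n - s) * r = q 0 * a"
    by (simp add: left_diff_distrib mult.assoc power_Suc2 del: power_Suc)
  then have "a * r ^ Suc n - s \<in> lprinc a"
    using cancel lprinc_iff by blast
  then have "a * r ^ Suc n - s \<in> lspan_pows a r n"
    using mono_lspan_pows lspan_pows_0 by (metis monoD subsetD zero_le)
  then have "a * r ^ Suc n \<in> lspan_pows a r n"
    using left_ideal_add[OF left_ideal_lspan_pows _ \<open>s \<in> lspan_pows a r n\<close>] by fastforce
  then show ?case
    by (rule Suc.IH)
qed

lemma extremely_prime_lprinc_mult_right:
  fixes a :: "'a::ring_1_no_zero_divisors"
  assumes pid: "pid_ring TYPE('a)" and ep: "extremely_prime (lprinc a)"
  shows "a * r \<in> lprinc a"
proof (cases "r \<in> lprinc a")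
  case True
  then obtain t where "r = t * a"
    by (auto simp: lprinc_iff)
  then show ?thesis
    by (metis lprinc_iff mult.assoc)
next
  case False
  then have cancel: "x * r \<in> lprinc a \<Longrightarrow> x \<in> lprinc a" for x
    using ep by (auto simp: extremely_prime_def)
  obtain N where "\<forall>n\<ge>N. lspan_pows a r n = lspan_pows a r N"
    using pid_left_ideal_chain_stabilises[OF pid left_ideal_lspan_pows mono_lspan_pows] by blast
  then have "a * r ^ Suc N \<in> lspan_pows a r N"
    using pow_in_lspan_pows[of a r "Suc N"] by (metis le_SucI order_refl)
  then show ?thesis
    using lspan_pows_descent cancel by blast
qed

lemma right_ideal_lprinc:
  assumes "rprinc a \<subseteq> lprinc a"
  shows "right_ideal (lprinc a)"
  unfolding right_ideal_def
proof (intro conjI ballI allI)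
  show "0 \<in> lprinc a" "\<And>x y. x \<in> lprinc a \<Longrightarrow> y \<in> lprinc a \<Longrightarrow> x + y \<in> lprinc a"
    using left_ideal_lprinc by (auto simp: left_ideal_def)
next
  fix r x assume "x \<in> lprinc a"
  then obtain c where "x = c * a"
    by (auto simp: lprinc_iff)
  moreover have "a * r \<in> lprinc a"
    using assms rprinc_iff by blast
  then obtain s where "a * r = s * a"
    by (auto simp: lprinc_iff)
  ultimately have "x * r = (c * s) * a"
    by (simp add: mult.assoc)
  then show "x * r \<in> lprinc a"
    by (auto simp: lprinc_iff)
qed

lemma lprinc_eq_rprinc_imp_eq_rprinc_self:
  fixes a :: "'a::ring_1_no_zero_divisors"
  assumes Rab: "lprinc a = rprinc b"
  shows "lprinc a = rprinc a"
proof
  obtain t where a_eq: "a = b * t"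
    using self_in_lprinc[of a] by (auto simp: Rab rprinc_iff)
  obtain u where b_eq: "b = u * a"
    using self_in_rprinc[of b] by (auto simp flip: Rab simp: lprinc_iff)
  show "rprinc a \<subseteq> lprinc a"
  proof
    fix y assume "y \<in> rprinc a"
    then obtain z where "y = b * (t * z)"
      by (auto simp: rprinc_iff a_eq mult.assoc)
    then show "y \<in> lprinc a"
      by (auto simp: Rab rprinc_iff)
  qed
  show "lprinc a \<subseteq> rprinc a"
  proof (cases "u = 0")
    case True
    then show ?thesis
      using a_eq b_eq by (simp add: lprinc_def rprinc_def)
  next
    case False
    show ?thesis
    proof
      fix y assume "y \<in> lprinc a"
      then obtain x where y: "y = x * a"
        by (auto simp: lprinc_iff)
      have "(u * x) * a \<in> rprinc b"
        by (auto simp flip: Rab simp: lprinc_iff)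
      then obtain z where "u * (x * a) = u * (a * z)"
        by (auto simp: rprinc_iff b_eq mult.assoc)
      then have "y = a * z"
        using False y by simp
      then show "y \<in> rprinc a"
        by (auto simp: rprinc_iff)
    qed
  qed
qed

lemma extremely_prime_lprinc_imp_invariant:
  fixes a :: "'a::ring_1_no_zero_divisors"
  assumes pid: "pid_ring TYPE('a)" and "a \<noteq> 0" and ep: "extremely_prime (lprinc a)"
  shows "invariant a"
proof -
  have "rprinc a \<subseteq> lprinc a"
    using extremely_prime_lprinc_mult_right[OF pid ep] by (auto simp: rprinc_iff)
  then have "right_ideal (lprinc a)"
    by (rule right_ideal_lprinc)
  then obtain b where "lprinc a = rprinc b"
    using pid by (auto simp: pid_ring_def)
  then show ?thesis
    using \<open>a \<noteq> 0\<close> lprinc_eq_rprinc_imp_eq_rprinc_self by (auto simp: invariant_def)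
qed

lemma extremely_prime_lprinc_imp_nc_irreducible:
  fixes a :: "'a::ring_1_no_zero_divisors"
  assumes inv: "invariant a" and ep: "extremely_prime (lprinc a)"
  shows "nc_irreducible a"
  unfolding nc_irreducible_def
proof (intro conjI allI impI)
  show "\<not> nc_unit a"
    using ep by (simp add: extremely_prime_def lprinc_eq_UNIV_iff)
next
  fix b c assume a_eq: "a = b * c"
  have "a \<noteq> 0" and Ra_aR: "lprinc a = rprinc a"
    using inv by (auto simp: invariant_def)
  have "b \<in> lprinc a \<or> c \<in> lprinc a"
    using ep a_eq self_in_lprinc by (auto simp: extremely_prime_def)
  then show "nc_unit b \<or> nc_unit c"
  proof
    assume "b \<in> lprinc a"
    then obtain t where "b = a * t"
      by (auto simp: Ra_aR rprinc_iff)
    then have "a * (t * c) = a"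
      using a_eq by (metis mult.assoc)
    then have "t * c = 1"
      using \<open>a \<noteq> 0\<close> by simp
    then show ?thesis
      using mult_eq_1_imp_nc_unit(2) by blast
  next
    assume "c \<in> lprinc a"
    then obtain t where "c = t * a"
      by (auto simp: lprinc_iff)
    then have "(b * t) * a = a"
      using a_eq by (metis mult.assoc)
    then have "b * t = 1"
      using \<open>a \<noteq> 0\<close> by simp
    then show ?thesis
      using mult_eq_1_imp_nc_unit(1) by blast
  qed
qed

lemma nc_irreducible_invariant_imp_extremely_prime:
  fixes a :: "'a::ring_1_no_zero_divisors"
  assumes pid: "pid_ring TYPE('a)" and irr: "nc_irreducible a" and inv: "invariant a"
  shows "extremely_prime (lprinc a)"
  unfolding extremely_prime_def
proof (intro conjI allI impI)
  show "lprinc a \<noteq> UNIV"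
    using irr by (simp add: lprinc_eq_UNIV_iff nc_irreducible_def)
next
  fix x y assume xy: "x * y \<in> lprinc a"
  show "x \<in> lprinc a \<or> y \<in> lprinc a"
  proof (cases "x \<in> lprinc a")
    case False
    then obtain \<alpha> \<beta> where "\<alpha> * a + \<beta> * x = 1"
      using nc_irreducible_lprinc_comaximal[OF pid irr] by blast
    then have "y = \<alpha> * (a * y) + \<beta> * (x * y)"
      by (metis distrib_right mult.assoc mult_1_left)
    moreover have "a * y \<in> lprinc a"
      using inv self_in_rprinc by (auto simp: invariant_def rprinc_iff)
    ultimately have "y \<in> lprinc a"
      using xy left_ideal_lprinc left_ideal_add left_ideal_mult by metis
    then show ?thesis ..
  qed simp
qed

theorem proposition3p2:
  fixes a :: "'a::ring_1_no_zero_divisors"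
  assumes "pid_ring TYPE('a)"
    and "lprinc a \<noteq> {0}"
  shows "extremely_prime (lprinc a) \<longleftrightarrow> nc_irreducible a \<and> invariant a"
proof -
  have "a \<noteq> 0"
    using assms(2) by (auto simp: lprinc_def)
  then show ?thesis
    using assms(1) extremely_prime_lprinc_imp_invariant extremely_prime_lprinc_imp_nc_irreducible
      nc_irreducible_invariant_imp_extremely_prime by blast
qed

end
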